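(* Let $X$ be a scalar random variable with distribution $\pi$ and upper bound $\ell\in\mathbb{R}$ such that $\mathbb{P}_\pi[X\le\ell]=1$. Let $\alpha\in(0,1]$, $\epsilon\in[0,1]$, and define \[ L(x,\mu,t) = t\left(\mu + \frac{1}{\alpha}\max\left\{\frac{x}{t}-\mu,0\right\}\right),\qquad u_b(\mu,t)=L(\ell,\mu,t). \] For $N$ independent samples $x_1,\dots,x_N$ of $X$, let $\zeta^*_N(\mu,t)=\max_{1\le k\le N}L(x_k,\mu,t)$. Then \[ \mathbb{P}^N_{\pi}\left[\mathrm{CVaR}_\alpha(X)\le \inf_{\mu\in\mathbb{R},\ t>0}\zeta^*_N(\mu,t)(1-\epsilon)+u_b(\mu,t)\epsilon\right]\ge 1-(1-\epsilon)^N. \]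
   Context: The Conditional-Value-at-Risk at level $\alpha\in(0,1]$ is $\mathrm{CVaR}_\alpha(X)=\inf_{z\in\mathbb{R}}\ z+\frac{\mathbb{E}_\pi[\max(X-z,0)]}{\alpha}$ (equivalently $\mathbb{E}_\pi[X\mid X\ge \mathrm{VaR}_\alpha(X)]$, where $\mathrm{VaR}_\alpha(X)=\inf\{\zeta : \mathbb{P}_\pi[X\le\zeta]\ge 1-\alpha\}$). $\zeta^*_N(\mu,t)$ is the solution of $\min_\zeta\zeta$ subject to $\zeta\ge L(x_i,\mu,t)$ for all $i$. $\mathbb{P}^N_\pi$ is the $N$-fold product measure governing the i.i.d. sample. *)

theory Defs
  imports "HOL-Probability.Probability"
begin

text \<open>Conditional Value-at-Risk of the (real-valued) random variable whose
  distribution is the probability measure pi on the reals (X = identity),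
  in the Rockafellar--Uryasev form inf_z z + E[max(X - z, 0)] / alpha.
  Taken in the extended reals, since the infimum may be minus infinity.\<close>
definition CVaR :: "real \<Rightarrow> real measure \<Rightarrow> ereal" where
  "CVaR \<alpha> \<pi> = (INF z \<in> (UNIV::real set).
       ereal (z + (\<integral>x. max (x - z) 0 \<partial>\<pi>) / \<alpha>))"

definition Lfun :: "real \<Rightarrow> real \<Rightarrow> real \<Rightarrow> real \<Rightarrow> real" where
  "Lfun \<alpha> x \<mu> t = t * (\<mu> + (1 / \<alpha>) * max (x / t - \<mu>) 0)"

definition zeta_star :: "real \<Rightarrow> nat \<Rightarrow> (nat \<Rightarrow> real) \<Rightarrow> real \<Rightarrow> real \<Rightarrow> real" where
  "zeta_star \<alpha> N xs \<mu> t = Max ((\<lambda>k. Lfun \<alpha> (xs k) \<mu> t) ` {..<N})"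

end

theory Submission
  imports Defs
begin

(* Put z = t mu, so that L(x, mu, t) = z + (x - z)+ / alpha and hence
   CVaR_alpha(X) <= z + E[(X - z)+] / alpha.  If P[X > m] <= eps, then, as X <= l almost surely,
   E[(X - z)+] is at most its value (1 - eps) (m - z)+ + eps (l - z)+ for the two-point law on m and l;
   this bounds CVaR_alpha(X) by (1 - eps) L(m, mu, t) + eps u_b(mu, t) for all mu and t > 0.
   Since L is nondecreasing in x, zeta*_N is L at the sample maximum, and the bound is monotone in m,
   so it suffices that some sample reaches the (1 - eps)-quantile of X.  All N samples stay below it
   with probability at most (1 - eps)^N. *)

lemma pred_borel_mono:
  fixes P :: "real \<Rightarrow> bool"
  assumes "mono P"
  shows "Measurable.pred borel P"
proof -
  have "mono (\<lambda>x. of_bool (P x) :: real)"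
    using assms by (auto intro!: monoI dest: monoD)
  then have "(\<lambda>x. of_bool (P x) :: real) \<in> borel_measurable borel"
    by (rule borel_measurable_mono)
  from pred_eq_const1[OF this, of 1] show ?thesis
    by simp
qed

lemma (in real_distribution) prob_greaterThan_eq:
  "prob {m<..} = 1 - cdf M m"
  using prob_compl[of "{..m}"] by (simp add: cdf_def Compl_eq_Diff_UNIV[symmetric] Compl_atMost)

lemma (in real_distribution) prob_cdf_less_le:
  assumes "0 \<le> u"
  shows "prob {x. cdf M x < u} \<le> u"
proof -
  consider "1 \<le> u" | "u = 0" | "0 < u" "u < 1"
    using assms by linarith
  then show ?thesis
  proof cases
    case 1
    then show ?thesis
      using prob_le_1[of "{x. cdf M x < u}"] by linarith
  next
    case 2
    then have "{x. cdf M x < u} = {}"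
      using cdf_nonneg by (simp add: not_less)
    then show ?thesis
      using \<open>u = 0\<close> by simp
  next
    case 3
    interpret cdf_distribution M by unfold_locales
    have cdf_less_iff: "cdf M x < u \<longleftrightarrow> x < I u" for x
      using pseudoinverse[OF 3, of x] by linarith
    have "prob {..<I u} \<le> u"
    proof (rule tendsto_upperbound[OF cdf_at_left])
      show "\<forall>\<^sub>F x in at_left (I u). cdf M x \<le> u"
        by (rule eventually_at_leftI[of "I u - 1"]) (auto simp: cdf_less_iff less_imp_le)
    qed simp
    moreover have "{x. cdf M x < u} = {..<I u}"
      by (auto simp: cdf_less_iff)
    ultimately show ?thesis by simp
  qed
qed

lemma (in product_prob_space) measure_PiM_Collect:
  assumes "J \<subseteq> I" "finite J" "\<And>i. i \<in> J \<Longrightarrow> X i \<in> sets (M i)"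
  shows "measure (Pi\<^sub>M I M) {x \<in> space (Pi\<^sub>M I M). \<forall>i\<in>J. x i \<in> X i} = (\<Prod>i\<in>J. measure (M i) (X i))"
proof -
  have "{x \<in> space (Pi\<^sub>M I M). \<forall>i\<in>J. x i \<in> X i} = emb I J (Pi\<^sub>E J X)"
    unfolding prod_emb_def using assms by (auto simp: space_PiM Pi_iff)
  with measure_PiM_emb[OF assms] show ?thesis by simp
qed

lemma (in real_distribution) prob_sample_Max_ge:
  fixes P :: "real \<Rightarrow> bool" and N :: nat
  assumes "mono P" and P_quantile: "\<And>m. 1 - \<epsilon> \<le> cdf M m \<Longrightarrow> P m" and "\<epsilon> \<le> 1"
  shows "1 - (1 - \<epsilon>) ^ N
           \<le> measure (PiM {..<N} (\<lambda>_. M)) {xs \<in> space (PiM {..<N} (\<lambda>_. M)). P (Max (xs ` {..<N}))}"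
proof -
  interpret Prod: product_prob_space "\<lambda>_. M" "{..<N}"
    by unfold_locales
  let ?P = "PiM {..<N} (\<lambda>_. M)"
  let ?T = "{xs \<in> space ?P. P (Max (xs ` {..<N}))}"
  have T_sets: "?T \<in> sets ?P"
    using pred_borel_mono[OF \<open>mono P\<close>] by measurable
  define A where "A = {x. cdf M x < 1 - \<epsilon>}"
  have "cdf M \<in> borel_measurable borel"
    by (intro borel_measurable_mono monoI cdf_nondecreasing)
  then have A_sets[measurable]: "A \<in> sets M"
    unfolding A_def by measurable
  define G where "G = {xs \<in> space ?P. \<exists>k<N. xs k \<notin> A}"
  have G_sets: "G \<in> sets ?P"
    unfolding G_def by measurable
  have "G \<subseteq> ?T"
  proof
    fix xs
    assume "xs \<in> G"
    then obtain k where k: "xs \<in> space ?P" "k < N" "P (xs k)"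
      unfolding G_def A_def by (auto simp: not_less intro: P_quantile)
    have "xs k \<le> Max (xs ` {..<N})"
      using k by (intro Max_ge) auto
    then have "P (Max (xs ` {..<N}))"
      using \<open>mono P\<close> \<open>P (xs k)\<close> by (metis le_boolD monoD)
    with k show "xs \<in> ?T"
      by simp
  qed
  have "space ?P - G = {xs \<in> space ?P. \<forall>k\<in>{..<N}. xs k \<in> A}"
    unfolding G_def by blast
  then have "measure ?P (space ?P - G) = prob A ^ N"
    using Prod.measure_PiM_Collect[of "{..<N}" "\<lambda>_. A"] A_sets by simp
  also have "\<dots> \<le> (1 - \<epsilon>) ^ N"
    unfolding A_def using prob_cdf_less_le \<open>\<epsilon> \<le> 1\<close> by (intro power_mono) auto
  finally have "1 - (1 - \<epsilon>) ^ N \<le> measure ?P G"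
    using Prod.prob_compl[OF G_sets] by simp
  also have "\<dots> \<le> measure ?P ?T"
    using \<open>G \<subseteq> ?T\<close> T_sets by (rule Prod.finite_measure_mono)
  finally show ?thesis .
qed

lemma (in real_distribution) integral_pos_part_le_two_point:
  assumes AE_le: "AE x in M. x \<le> l" and tail: "prob {m<..} \<le> \<epsilon>" and "\<epsilon> \<le> 1"
  shows "(\<integral>x. max (x - z) 0 \<partial>M) \<le> (1 - \<epsilon>) * max (m - z) 0 + \<epsilon> * max (l - z) 0"
proof -
  define a where "a = max (m - z) 0"
  define b where "b = max (l - z) 0"
  show ?thesis
  proof (cases "b \<le> a")
    case True
    have "(\<integral>x. max (x - z) 0 \<partial>M) \<le> (\<integral>x. b \<partial>M)"
      by (rule integral_mono_AE') (use AE_le in \<open>auto simp: b_def elim!: eventually_mono\<close>)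
    also have "\<dots> = b"
      using prob_space by simp
    also have "\<dots> \<le> (1 - \<epsilon>) * a + \<epsilon> * b"
      using True \<open>\<epsilon> \<le> 1\<close> mult_left_mono[of b a "1 - \<epsilon>"] by (simp add: algebra_simps)
    finally show ?thesis
      by (simp add: a_def b_def)
  next
    case False
    have integrable: "integrable M (\<lambda>x. a + (b - a) * indicator {m<..} x)"
      by (intro Bochner_Integration.integrable_add integrable_mult_right)
         (auto simp: integrable_indicator_iff less_top[symmetric])
    have "(\<integral>x. max (x - z) 0 \<partial>M) \<le> (\<integral>x. a + (b - a) * indicator {m<..} x \<partial>M)"
    proof (rule integral_mono_AE'[OF integrable])
      show "AE x in M. max (x - z) 0 \<le> a + (b - a) * indicator {m<..} x"
        using AE_le by eventually_elim (auto simp: a_def b_def indicator_def)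
      show "AE x in M. 0 \<le> a + (b - a) * indicator {m<..} x"
        using False by (auto simp: a_def b_def indicator_def)
    qed
    also have "\<dots> = a + (b - a) * prob {m<..}"
      by (subst Bochner_Integration.integral_add)
         (use prob_space in \<open>auto simp: integrable_indicator_iff less_top[symmetric]\<close>)
    also have "\<dots> \<le> a + (b - a) * \<epsilon>"
      using False tail by (intro add_left_mono mult_left_mono) auto
    finally show ?thesis
      by (simp add: a_def b_def algebra_simps)
  qed
qed

lemma Lfun_eq:
  assumes "0 < t"
  shows "Lfun \<alpha> x \<mu> t = t * \<mu> + max (x - t * \<mu>) 0 / \<alpha>"
proof -
  have "t * max (x / t - \<mu>) 0 = max (x - t * \<mu>) 0"
    using assms by (simp add: max_def field_simps)
  then show ?thesis
    unfolding Lfun_def by (simp add: algebra_simps)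
qed

lemma mono_Lfun:
  assumes "0 \<le> \<alpha>" "0 < t"
  shows "mono (\<lambda>x. Lfun \<alpha> x \<mu> t)"
  using assms by (auto intro!: monoI divide_right_mono simp: Lfun_eq)

lemma zeta_star_eq_Lfun_Max:
  assumes "0 \<le> \<alpha>" "0 < t" "0 < N"
  shows "zeta_star \<alpha> N xs \<mu> t = Lfun \<alpha> (Max (xs ` {..<N})) \<mu> t"
proof -
  have "Lfun \<alpha> (Max (xs ` {..<N})) \<mu> t = Max ((\<lambda>x. Lfun \<alpha> x \<mu> t) ` xs ` {..<N})"
    using assms by (intro mono_Max_commute mono_Lfun) auto
  then show ?thesis
    unfolding zeta_star_def by (simp add: image_image)
qed

definition CVaR_bound :: "real \<Rightarrow> real \<Rightarrow> real \<Rightarrow> real \<Rightarrow> ereal" where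
  "CVaR_bound \<alpha> l \<epsilon> m = (INF p \<in> (UNIV::real set) \<times> {0<..}.
     ereal (Lfun \<alpha> m (fst p) (snd p) * (1 - \<epsilon>) + Lfun \<alpha> l (fst p) (snd p) * \<epsilon>))"

lemma INF_zeta_star_eq_CVaR_bound:
  assumes "0 \<le> \<alpha>" "0 < N"
  shows "(INF p \<in> (UNIV::real set) \<times> {0<..}.
           ereal (zeta_star \<alpha> N xs (fst p) (snd p) * (1 - \<epsilon>) + Lfun \<alpha> l (fst p) (snd p) * \<epsilon>))
         = CVaR_bound \<alpha> l \<epsilon> (Max (xs ` {..<N}))"
  unfolding CVaR_bound_def using assms by (intro INF_cong) (auto simp: zeta_star_eq_Lfun_Max)

lemma mono_CVaR_bound:
  assumes "0 \<le> \<alpha>" "\<epsilon> \<le> 1"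
  shows "mono (CVaR_bound \<alpha> l \<epsilon>)"
proof (rule monoI)
  fix m m' :: real
  assume "m \<le> m'"
  have "Lfun \<alpha> m \<mu> t * (1 - \<epsilon>) \<le> Lfun \<alpha> m' \<mu> t * (1 - \<epsilon>)" if "0 < t" for \<mu> t
    using assms monoD[OF mono_Lfun[OF assms(1) that] \<open>m \<le> m'\<close>] by (intro mult_right_mono) auto
  then show "CVaR_bound \<alpha> l \<epsilon> m \<le> CVaR_bound \<alpha> l \<epsilon> m'"
    unfolding CVaR_bound_def by (intro INF_superset_mono) auto
qed

lemma CVaR_le_CVaR_bound:
  assumes "real_distribution \<pi>" "AE x in \<pi>. x \<le> l" "measure \<pi> {m<..} \<le> \<epsilon>" "0 \<le> \<alpha>" "\<epsilon> \<le> 1"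
  shows "CVaR \<alpha> \<pi> \<le> CVaR_bound \<alpha> l \<epsilon> m"
  unfolding CVaR_bound_def
proof (rule INF_greatest)
  fix p :: "real \<times> real"
  assume "p \<in> UNIV \<times> {0<..}"
  then obtain \<mu> t where p: "p = (\<mu>, t)" "0 < t"
    by auto
  have integral_le: "(\<integral>x. max (x - t * \<mu>) 0 \<partial>\<pi>) \<le> (1 - \<epsilon>) * max (m - t * \<mu>) 0 + \<epsilon> * max (l - t * \<mu>) 0"
    using assms by (intro real_distribution.integral_pos_part_le_two_point) auto
  have "CVaR \<alpha> \<pi> \<le> ereal (t * \<mu> + (\<integral>x. max (x - t * \<mu>) 0 \<partial>\<pi>) / \<alpha>)"
    unfolding CVaR_def by (rule INF_lower) simp
  also have "\<dots> \<le> ereal (t * \<mu> + ((1 - \<epsilon>) * max (m - t * \<mu>) 0 + \<epsilon> * max (l - t * \<mu>) 0) / \<alpha>)"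
    using integral_le \<open>0 \<le> \<alpha>\<close> by (simp add: divide_right_mono)
  also have "\<dots> = ereal (Lfun \<alpha> m \<mu> t * (1 - \<epsilon>) + Lfun \<alpha> l \<mu> t * \<epsilon>)"
    using p by (simp add: Lfun_eq algebra_simps add_divide_distrib diff_divide_distrib)
  finally show "CVaR \<alpha> \<pi> \<le> ereal (Lfun \<alpha> m (fst p) (snd p) * (1 - \<epsilon>) + Lfun \<alpha> l (fst p) (snd p) * \<epsilon>)"
    using p by simp
qed

theorem corollary3:
  fixes \<pi> :: "real measure" and l \<alpha> \<epsilon> :: real and N :: nat
  assumes "prob_space \<pi>"
    and "sets \<pi> = sets borel"
    and "measure \<pi> {x. x \<le> l} = 1"
    and "0 < \<alpha>" and "\<alpha> \<le> 1"
    and "0 \<le> \<epsilon>" and "\<epsilon> \<le> 1"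
  shows "measure (PiM {..<N} (\<lambda>_. \<pi>))
           {xs \<in> space (PiM {..<N} (\<lambda>_. \<pi>)).
              CVaR \<alpha> \<pi> \<le> (INF p \<in> (UNIV::real set) \<times> {0<..}.
                 ereal (zeta_star \<alpha> N xs (fst p) (snd p) * (1 - \<epsilon>)
                        + Lfun \<alpha> l (fst p) (snd p) * \<epsilon>))}
         \<ge> 1 - (1 - \<epsilon>) ^ N"
proof (cases "N = 0")
  case False
  have distr: "real_distribution \<pi>"
    using assms(1,2) by (simp add: real_distribution_def real_distribution_axioms_def)
  then interpret real_distribution \<pi> .
  have AE_le: "AE x in \<pi>. x \<le> l"
    using AE_prob_1[OF assms(3)] by simp
  let ?P = "PiM {..<N} (\<lambda>_. \<pi>)"
  have "1 - (1 - \<epsilon>) ^ N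
          \<le> measure ?P {xs \<in> space ?P. CVaR \<alpha> \<pi> \<le> CVaR_bound \<alpha> l \<epsilon> (Max (xs ` {..<N}))}"
  proof (rule prob_sample_Max_ge)
    show "mono (\<lambda>m. CVaR \<alpha> \<pi> \<le> CVaR_bound \<alpha> l \<epsilon> m)"
      using monoD[OF mono_CVaR_bound] assms(4,7) by (intro monoI le_boolI) (meson less_imp_le order.trans)
    show "CVaR \<alpha> \<pi> \<le> CVaR_bound \<alpha> l \<epsilon> m" if "1 - \<epsilon> \<le> cdf \<pi> m" for m
      using that assms(4,7) by (intro CVaR_le_CVaR_bound[OF distr AE_le]) (auto simp: prob_greaterThan_eq)
  qed (fact assms(7))
  with False assms(4) show ?thesis
    by (simp add: INF_zeta_star_eq_CVaR_bound)
qed simp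

end
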